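(* $C_3(82) = 7$.
   Context: For positive integers $m, r$, $C_m(r)$ is the minimum odd positive integer $n$ such that there exist vectors $v_1, \ldots, v_n \in \mathbb{Z}^m$ (not necessarily distinct) with $|v_i| = \sqrt{r}$ (Euclidean norm) for every $i$ and $v_1 + \cdots + v_n = \mathbf{0}$; if no such odd $n$ exists, $C_m(r) = 0$. *)

theory Defs
  imports Complex_Main
begin

text \<open>Vectors in Z^m are represented as integer lists of length m.
  Euclidean norm of an integer vector.\<close>
definition znorm :: "int list \<Rightarrow> real" where
  "znorm v = sqrt (\<Sum>x\<leftarrow>v. real_of_int x ^ 2)"

definition zero_sum_config :: "nat \<Rightarrow> nat \<Rightarrow> nat \<Rightarrow> bool" where
  "zero_sum_config m r n \<longleftrightarrow>
     (\<exists>v :: nat \<Rightarrow> int list.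
        (\<forall>i<n. length (v i) = m \<and> znorm (v i) = sqrt (real r)) \<and>
        (\<forall>j<m. (\<Sum>i<n. v i ! j) = 0))"

definition C :: "nat \<Rightarrow> nat \<Rightarrow> nat" where
  "C m r = (if \<exists>n. odd n \<and> 0 < n \<and> zero_sum_config m r n
            then (LEAST n. odd n \<and> 0 < n \<and> zero_sum_config m r n) else 0)"

end

(* The integer points of squared norm 82 are the 48 signed permutations of (9, 1, 0) and (8, 3, 3),
   and seven of them sum to zero. A single one is nonzero, and three cannot sum to zero because no
   two points of the sphere add up to a third one. Five are excluded by a finite search: in
   a + b + c + d + e = 0 we may assume by symmetry that a is one of the two orbit representatives,
   and then x = a + b + c = -(d + e) must have the squared norm of a sum of two sphere points,
   which leaves few x to test against x + d = -e. *)

theory Submission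
  imports Defs "HOL-Library.Product_Plus"
begin

type_synonym vec3 = "int \<times> int \<times> int"

definition sqnorm :: "vec3 \<Rightarrow> int" where
  "sqnorm = (\<lambda>(x, y, z). x\<^sup>2 + y\<^sup>2 + z\<^sup>2)"

definition list_of_vec3 :: "vec3 \<Rightarrow> int list" where
  "list_of_vec3 = (\<lambda>(x, y, z). [x, y, z])"

lemma sqnorm_uminus [simp]: "sqnorm (- v) = sqnorm v"
  by (simp add: sqnorm_def split: prod.splits)

lemma znorm_list_of_vec3: "znorm (list_of_vec3 v) = sqrt (of_int (sqnorm v))"
  by (simp add: znorm_def list_of_vec3_def sqnorm_def split: prod.splits)

lemma length_list_of_vec3: "length (list_of_vec3 v) = 3"
  by (simp add: list_of_vec3_def split: prod.splits)

lemma list_of_vec3_coords_eq: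
  "length xs = 3 \<Longrightarrow> list_of_vec3 (xs ! 0, xs ! 1, xs ! 2) = xs"
  by (auto simp: list_of_vec3_def numeral_3_eq_3 length_Suc_conv)

lemma coordinate_sums_eq_0_iff:
  "(\<forall>j<3. (\<Sum>i\<in>A. list_of_vec3 (v i) ! j) = 0) \<longleftrightarrow> sum v A = 0"
proof -
  have "(\<forall>j<3. (\<Sum>i\<in>A. list_of_vec3 (v i) ! j) = 0) \<longleftrightarrow>
      (\<Sum>i\<in>A. fst (v i)) = 0 \<and> (\<Sum>i\<in>A. fst (snd (v i))) = 0 \<and> (\<Sum>i\<in>A. snd (snd (v i))) = 0"
    by (auto simp: list_of_vec3_def split_beta less_Suc_eq numeral_3_eq_3)
  also have "\<dots> \<longleftrightarrow> sum v A = 0"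
    by (simp add: prod_eq_iff fst_sum snd_sum)
  finally show ?thesis .
qed

lemma zero_sum_config_3_iff:
  "zero_sum_config 3 r n \<longleftrightarrow> (\<exists>v. (\<forall>i<n. sqnorm (v i) = int r) \<and> (\<Sum>i<n. v i) = 0)"
proof
  assume "zero_sum_config 3 r n"
  then obtain xs where len: "\<forall>i<n. length (xs i) = 3"
    and norm: "\<forall>i<n. znorm (xs i) = sqrt (real r)"
    and sums: "\<forall>j<3. (\<Sum>i<n. xs i ! j) = 0"
    unfolding zero_sum_config_def by blast
  define v where "v i = (xs i ! 0, xs i ! 1, xs i ! 2)" for i
  have xs_eq: "list_of_vec3 (v i) = xs i" if "i < n" for i
    unfolding v_def using len that by (intro list_of_vec3_coords_eq) blast
  have "\<forall>i<n. sqnorm (v i) = int r"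
    using norm by (metis xs_eq znorm_list_of_vec3 of_int_of_nat_eq real_sqrt_eq_iff of_int_eq_iff)
  moreover have "(\<Sum>i<n. v i) = 0"
    unfolding coordinate_sums_eq_0_iff [symmetric] using sums by (simp add: xs_eq)
  ultimately show "\<exists>v. (\<forall>i<n. sqnorm (v i) = int r) \<and> (\<Sum>i<n. v i) = 0" by blast
next
  assume "\<exists>v. (\<forall>i<n. sqnorm (v i) = int r) \<and> (\<Sum>i<n. v i) = 0"
  then obtain v :: "nat \<Rightarrow> vec3" where norm: "\<forall>i<n. sqnorm (v i) = int r" and sum: "(\<Sum>i<n. v i) = 0"
    by blast
  have "\<forall>i<n. length (list_of_vec3 (v i)) = 3 \<and> znorm (list_of_vec3 (v i)) = sqrt (real r)"
    using norm by (simp add: znorm_list_of_vec3 length_list_of_vec3)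
  moreover have "\<forall>j<3. (\<Sum>i<n. list_of_vec3 (v i) ! j) = 0"
    using sum by (simp only: coordinate_sums_eq_0_iff)
  ultimately show "zero_sum_config 3 r n"
    unfolding zero_sum_config_def by (intro exI [of _ "\<lambda>i. list_of_vec3 (v i)"]) blast
qed

lemma C_eqI:
  assumes "odd n" "zero_sum_config m r n"
    and "\<And>k. odd k \<Longrightarrow> k < n \<Longrightarrow> \<not> zero_sum_config m r k"
  shows "C m r = n"
proof -
  have "(LEAST k. odd k \<and> 0 < k \<and> zero_sum_config m r k) = n"
    using assms by (intro Least_equality) (auto simp: odd_pos intro: leI)
  with assms(1,2) show ?thesis
    unfolding C_def by (auto simp: odd_pos)
qed

definition sphere_points :: "int \<Rightarrow> int \<Rightarrow> vec3 list" where
  "sphere_points k r =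
     [(x, y, z). x \<leftarrow> [-k..k], y \<leftarrow> [-k..k], z \<leftarrow> [-k..k], x\<^sup>2 + y\<^sup>2 + z\<^sup>2 = r]"

lemma mem_sphere_points:
  "(x, y, z) \<in> set (sphere_points k r) \<longleftrightarrow>
     x \<in> {-k..k} \<and> y \<in> {-k..k} \<and> z \<in> {-k..k} \<and> x\<^sup>2 + y\<^sup>2 + z\<^sup>2 = r"
  unfolding sphere_points_def
  by (simp only: set_concat set_map set_upto) (auto split: if_splits)

lemma set_sphere_points:
  assumes "r < (k + 1)\<^sup>2" "0 \<le> k"
  shows "set (sphere_points k r) = {v. sqnorm v = r}"
proof -
  have bound: "t \<in> {-k..k}" if "t\<^sup>2 \<le> r" for t :: int
  proof -
    have "\<bar>t\<bar>\<^sup>2 < (k + 1)\<^sup>2"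
      using that assms(1) by simp
    then have "\<bar>t\<bar> < k + 1"
      by (rule power2_less_imp_less) (simp add: assms(2))
    then show ?thesis by auto
  qed
  have "(x, y, z) \<in> set (sphere_points k r) \<longleftrightarrow> x\<^sup>2 + y\<^sup>2 + z\<^sup>2 = r" for x y z
    using bound [of x] bound [of y] bound [of z]
      zero_le_power2 [of x] zero_le_power2 [of y] zero_le_power2 [of z]
    unfolding mem_sphere_points by linarith
  then show ?thesis
    by (auto simp: sqnorm_def)
qed

abbreviation sphere82 :: "vec3 list" where
  "sphere82 \<equiv> sphere_points 9 82"

lemma set_sphere82: "set sphere82 = {v. sqnorm v = 82}"
  by (rule set_sphere_points) simp_all

definition coord_perms :: "(vec3 \<Rightarrow> vec3) list" where
  "coord_perms = [\<lambda>(x, y, z). (x, y, z), \<lambda>(x, y, z). (x, z, y), \<lambda>(x, y, z). (y, x, z),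
                  \<lambda>(x, y, z). (y, z, x), \<lambda>(x, y, z). (z, x, y), \<lambda>(x, y, z). (z, y, x)]"

definition sign_change :: "vec3 \<Rightarrow> vec3 \<Rightarrow> vec3" where
  "sign_change = (\<lambda>(s, t, u) (x, y, z). (s * x, t * y, u * z))"

definition signed_perms :: "(vec3 \<Rightarrow> vec3) list" where
  "signed_perms =
     [p \<circ> sign_change (s, t, u). p \<leftarrow> coord_perms, s \<leftarrow> [1, -1], t \<leftarrow> [1, -1], u \<leftarrow> [1, -1]]"

lemma additive_signed_perm: "g \<in> set signed_perms \<Longrightarrow> additive g"
  by (auto simp: signed_perms_def coord_perms_def sign_change_def additive_def algebra_simps)

lemma sqnorm_signed_perm: "g \<in> set signed_perms \<Longrightarrow> sqnorm (g v) = sqnorm v"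
  by (auto simp: signed_perms_def coord_perms_def sign_change_def sqnorm_def split: prod.splits)

definition orbit_reps82 :: "vec3 list" where
  "orbit_reps82 = [(9, 1, 0), (8, 3, 3)]"

lemma sphere82_orbit_reps:
  assumes "sqnorm v = 82"
  obtains g where "g \<in> set signed_perms" "g v \<in> set orbit_reps82"
proof -
  have "list_all (\<lambda>v. list_ex (\<lambda>g. g v \<in> set orbit_reps82) signed_perms) sphere82"
    by code_simp
  then show ?thesis
    using assms that unfolding list_all_iff list_ex_iff set_sphere82 by blast
qed

(* By symmetry, the first summand may be taken to be an orbit representative. *)
definition pair_sqnorms82 :: "int list" where
  "pair_sqnorms82 = remdups [sqnorm (a + v). a \<leftarrow> orbit_reps82, v \<leftarrow> sphere82]"

lemma sqnorm_add_mem_pair_sqnorms82: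
  assumes "sqnorm u = 82" "sqnorm v = 82"
  shows "sqnorm (u + v) \<in> set pair_sqnorms82"
proof -
  obtain g where g: "g \<in> set signed_perms" "g u \<in> set orbit_reps82"
    using sphere82_orbit_reps assms(1) by blast
  have "sqnorm (u + v) = sqnorm (g u + g v)"
    using g(1) by (simp add: sqnorm_signed_perm flip: additive.add [OF additive_signed_perm])
  moreover have "g v \<in> set sphere82"
    using g(1) assms(2) by (simp add: set_sphere82 sqnorm_signed_perm)
  ultimately show ?thesis
    using g(2) by (auto simp: pair_sqnorms82_def)
qed

lemma sphere82_add_not_in_sphere82:
  assumes "sqnorm u = 82" "sqnorm v = 82"
  shows "sqnorm (u + v) \<noteq> 82"
proof -
  have "82 \<notin> set pair_sqnorms82"
    by code_simp
  then show ?thesis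
    using sqnorm_add_mem_pair_sqnorms82 [OF assms] by auto
qed

(* N is only a filter on x = a + b + c (it should contain all sqnorm (d + e)); writing it as an
   if rather than an implication makes code_simp skip the inner loop when the filter fails. *)
definition no_zero_sum5_from :: "int \<Rightarrow> vec3 list \<Rightarrow> int list \<Rightarrow> vec3 \<Rightarrow> bool" where
  "no_zero_sum5_from r S N a \<longleftrightarrow>
     list_all (\<lambda>b. list_all (\<lambda>c. let x = a + b + c in
       if sqnorm x \<in> set N then list_all (\<lambda>d. sqnorm (x + d) \<noteq> r) S else True) S) S"

lemma no_zero_sum5_fromD:
  assumes "no_zero_sum5_from r S N a" "b \<in> set S" "c \<in> set S" "d \<in> set S"
    and "sqnorm e = r" "sqnorm (d + e) \<in> set N"
  shows "a + b + c + d + e \<noteq> 0"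
proof
  assume "a + b + c + d + e = 0"
  then have x_eq: "a + b + c = - (d + e)" and "a + b + c + d = - e"
    by (simp_all add: algebra_simps eq_neg_iff_add_eq_0)
  have "if sqnorm (a + b + c) \<in> set N then list_all (\<lambda>d'. sqnorm (a + b + c + d') \<noteq> r) S else True"
    using assms(1-3) unfolding no_zero_sum5_from_def list_all_iff Let_def by blast
  moreover have "sqnorm (a + b + c) \<in> set N"
    using assms(6) by (simp only: x_eq sqnorm_uminus)
  ultimately have "\<forall>d'\<in>set S. sqnorm (a + b + c + d') \<noteq> r"
    by (simp add: list_all_iff)
  then show False
    using \<open>a + b + c + d = - e\<close> assms(4,5) by auto
qed

lemma no_zero_sum5_from_9_1_0: "no_zero_sum5_from 82 sphere82 pair_sqnorms82 (9, 1, 0)"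
  by code_simp

lemma no_zero_sum5_from_8_3_3: "no_zero_sum5_from 82 sphere82 pair_sqnorms82 (8, 3, 3)"
  by code_simp

lemma sphere82_no_zero_sum5:
  assumes "sqnorm a = 82" "sqnorm b = 82" "sqnorm c = 82" "sqnorm d = 82" "sqnorm e = 82"
  shows "a + b + c + d + e \<noteq> 0"
proof
  assume zero_sum: "a + b + c + d + e = 0"
  obtain g where g: "g \<in> set signed_perms" "g a \<in> set orbit_reps82"
    using sphere82_orbit_reps assms(1) by blast
  interpret g: additive g
    using g(1) by (rule additive_signed_perm)
  have "g a + g b + g c + g d + g e = 0"
    using zero_sum by (simp flip: g.add add: g.zero)
  moreover have "no_zero_sum5_from 82 sphere82 pair_sqnorms82 (g a)"
    using g(2) no_zero_sum5_from_9_1_0 no_zero_sum5_from_8_3_3 by (auto simp: orbit_reps82_def)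
  moreover have "sqnorm (g v) = 82" if "sqnorm v = 82" for v
    using g(1) that by (simp add: sqnorm_signed_perm)
  ultimately show False
    using assms no_zero_sum5_fromD [of 82 sphere82 pair_sqnorms82 "g a" "g b" "g c" "g d" "g e"]
    by (simp add: set_sphere82 sqnorm_add_mem_pair_sqnorms82)
qed

lemma not_zero_sum_config_3_1: "0 < r \<Longrightarrow> \<not> zero_sum_config 3 r 1"
  by (auto simp: zero_sum_config_3_iff sqnorm_def zero_prod_def)

lemma not_zero_sum_config_3_82_3: "\<not> zero_sum_config 3 82 3"
proof
  assume "zero_sum_config 3 82 3"
  then obtain v :: "nat \<Rightarrow> vec3" where norm: "\<forall>i<3. sqnorm (v i) = 82" and "(\<Sum>i<3. v i) = 0"
    by (auto simp: zero_sum_config_3_iff)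
  then have "v 0 + v 1 = - v 2"
    by (simp add: eval_nat_numeral algebra_simps eq_neg_iff_add_eq_0)
  then show False
    using norm sphere82_add_not_in_sphere82 [of "v 0" "v 1"] by simp
qed

lemma not_zero_sum_config_3_82_5: "\<not> zero_sum_config 3 82 5"
proof
  assume "zero_sum_config 3 82 5"
  then obtain v :: "nat \<Rightarrow> vec3" where norm: "\<forall>i<5. sqnorm (v i) = 82" and "(\<Sum>i<5. v i) = 0"
    by (auto simp: zero_sum_config_3_iff)
  then have "v 0 + v 1 + v 2 + v 3 + v 4 = 0"
    by (simp add: eval_nat_numeral algebra_simps)
  then show False
    using norm sphere82_no_zero_sum5 [of "v 0" "v 1" "v 2" "v 3" "v 4"] by simp
qed

lemma zero_sum_config_3_82_7: "zero_sum_config 3 82 7"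
proof -
  define v :: "nat \<Rightarrow> vec3" where
    "v = (!) [(-9, -1, 0), (-9, -1, 0), (-9, 1, 0), (3, -8, -3), (8, 3, -3), (8, 3, 3), (8, 3, 3)]"
  have "\<forall>i<7. sqnorm (v i) = 82"
    by (auto simp: v_def sqnorm_def less_Suc_eq numeral_eq_Suc)
  moreover have "(\<Sum>i<7. v i) = 0"
    by (simp add: v_def eval_nat_numeral zero_prod_def)
  ultimately show ?thesis
    unfolding zero_sum_config_3_iff by auto
qed

theorem theorem5:
  shows "C 3 82 = 7"
proof (rule C_eqI)
  show "odd (7::nat)"
    by simp
  show "zero_sum_config 3 82 7"
    by (rule zero_sum_config_3_82_7)
  fix k :: nat
  assume "odd k" "k < 7"
  then have "k = 1 \<or> k = 3 \<or> k = 5"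
    by presburger
  then show "\<not> zero_sum_config 3 82 k"
    using not_zero_sum_config_3_1 not_zero_sum_config_3_82_3 not_zero_sum_config_3_82_5 by auto
qed

end
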